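(* There is an absolute constant $C$ such that for all positive integers $n$, $\mathrm{sf}(\Lambda(R_0))\le 2^{0.36n^2+Cn}\,\mathrm{sf}(\Lambda(R\cup L))$.
   Context: $R_0=\{(x,y)\in[0,n]^2:0.7n\le x+y\le1.7n\}$, $R=\{(x,y)\in\mathbb{R}^2:0.7n\le x+y\le n,\ |x-y|\le0.8n\}$, $L=\{(x,y)\in\mathbb{R}^2:2\lceil0.7n\rceil\le x+y\le1.7n,\ |x-y|\le0.4n\}$. For $X\subseteq\mathbb{R}^2$, $\Lambda(X)=\mathbb{Z}^2\cap X$. $\mathrm{sf}(Y)$ is the number of sum-free subsets of a finite $Y\subset\mathbb{Z}^2$ (no $a,b,c$, not necessarily distinct, with $a+b=c$). *)

theory Defs
  imports "HOL-Analysis.Analysis"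
begin

definition R0 :: "nat \<Rightarrow> (real \<times> real) set" where
  "R0 n = {(x, y). 0 \<le> x \<and> x \<le> real n \<and> 0 \<le> y \<and> y \<le> real n \<and>
                  0.7 * real n \<le> x + y \<and> x + y \<le> 1.7 * real n}"

definition Rreg :: "nat \<Rightarrow> (real \<times> real) set" where
  "Rreg n = {(x, y). 0.7 * real n \<le> x + y \<and> x + y \<le> real n \<and> \<bar>x - y\<bar> \<le> 0.8 * real n}"

definition Lreg :: "nat \<Rightarrow> (real \<times> real) set" where
  "Lreg n = {(x, y). 2 * real_of_int \<lceil>0.7 * real n\<rceil> \<le> x + y \<and> x + y \<le> 1.7 * real n \<and>
                    \<bar>x - y\<bar> \<le> 0.4 * real n}"

definition Lambda :: "(real \<times> real) set \<Rightarrow> (int \<times> int) set" where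
  "Lambda X = {(a, b). (real_of_int a, real_of_int b) \<in> X}"

definition sum_free :: "(int \<times> int) set \<Rightarrow> bool" where
  "sum_free A \<longleftrightarrow> (\<forall>a\<in>A. \<forall>b\<in>A. \<forall>c\<in>A. a + b \<noteq> c)"

definition sf :: "(int \<times> int) set \<Rightarrow> nat" where
  "sf Y = card {A. A \<subseteq> Y \<and> sum_free A}"

end

theory Submission
  imports Defs
begin

text \<open>A sum-free subset of \<open>\<Lambda>(R\<^sub>0)\<close> is determined by its trace on \<open>\<Lambda>(R \<union> L)\<close>, which is
  again sum-free, together with an arbitrary subset of the difference
  \<open>\<Lambda>(R\<^sub>0) - \<Lambda>(R \<union> L)\<close>; so it suffices to show that this difference has at most
  \<open>0.36 n\<^sup>2 + O(n)\<close> points. It is covered by the band \<open>n < x + y < 2\<lceil>0.7 n\<rceil>\<close> of the square,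
  which the reflection \<open>(x, y) \<mapsto> (n - x, n - y)\<close> turns into a difference of two lattice triangles
  with about \<open>(1 - 0.6\<^sup>2) n\<^sup>2 / 2 = 0.32 n\<^sup>2\<close> points, and by four corners, each mapped by an
  injective affine map into the lattice triangle \<open>2p + q \<le> 0.2 n\<close> with about \<open>0.01 n\<^sup>2\<close> points.\<close>

lemma card_downward_closed_subsets_le:
  assumes "finite Y" and downward_closed: "\<And>A B. P A \<Longrightarrow> B \<subseteq> A \<Longrightarrow> P B"
  shows "card {A. A \<subseteq> Y \<and> P A} \<le> 2 ^ card (Y - Z) * card {A. A \<subseteq> Y \<inter> Z \<and> P A}"
proof -
  let ?split = "\<lambda>A. (A - Z, A \<inter> Z)"
  let ?target = "Pow (Y - Z) \<times> {A. A \<subseteq> Y \<inter> Z \<and> P A}"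
  have "inj_on ?split {A. A \<subseteq> Y \<and> P A}"
    by (auto simp: inj_on_def)
  moreover have "?split ` {A. A \<subseteq> Y \<and> P A} \<subseteq> ?target"
    using downward_closed by auto
  moreover have "finite ?target"
    using assms(1) by auto
  ultimately have "card {A. A \<subseteq> Y \<and> P A} \<le> card ?target"
    by (rule card_inj_on_le)
  then show ?thesis
    using assms(1) by (simp add: card_cartesian_product card_Pow)
qed

lemma sum_free_subset: "sum_free A \<Longrightarrow> B \<subseteq> A \<Longrightarrow> sum_free B"
  unfolding sum_free_def by blast

lemma sf_mono:
  assumes "finite Z" "Y \<subseteq> Z"
  shows "sf Y \<le> sf Z"
  unfolding sf_def using assms by (intro card_mono) (auto intro: finite_subset[of _ "Pow Z"])

lemma sf_le_pow_card_diff: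
  assumes "finite Y" "finite Z"
  shows "sf Y \<le> 2 ^ card (Y - Z) * sf Z"
proof -
  have "sf Y \<le> 2 ^ card (Y - Z) * sf (Y \<inter> Z)"
    unfolding sf_def using assms(1) sum_free_subset by (rule card_downward_closed_subsets_le)
  also have "\<dots> \<le> 2 ^ card (Y - Z) * sf Z"
    using sf_mono[OF assms(2)] by simp
  finally show ?thesis .
qed

lemma finite_Lambda:
  assumes "bounded X"
  shows "finite (Lambda X)"
proof -
  obtain M where M: "\<And>z. z \<in> X \<Longrightarrow> norm z \<le> M"
    using assms by (auto simp: bounded_iff)
  have "Lambda X \<subseteq> {-\<lceil>M\<rceil>..\<lceil>M\<rceil>} \<times> {-\<lceil>M\<rceil>..\<lceil>M\<rceil>}"
  proof (rule subrelI)
    fix a b assume "(a, b) \<in> Lambda X"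
    then have "norm (real_of_int a, real_of_int b) \<le> M"
      by (auto simp: Lambda_def intro: M)
    then have "\<bar>real_of_int a\<bar> \<le> M" "\<bar>real_of_int b\<bar> \<le> M"
      using norm_fst_le[of "real_of_int a" "real_of_int b"]
        norm_snd_le[of "real_of_int b" "real_of_int a"] by auto
    moreover have "M \<le> real_of_int \<lceil>M\<rceil>"
      by (rule le_of_int_ceiling)
    ultimately have "\<bar>a\<bar> \<le> \<lceil>M\<rceil>" "\<bar>b\<bar> \<le> \<lceil>M\<rceil>"
      by linarith+
    then show "(a, b) \<in> {-\<lceil>M\<rceil>..\<lceil>M\<rceil>} \<times> {-\<lceil>M\<rceil>..\<lceil>M\<rceil>}"
      by auto
  qed
  then show ?thesis
    by (rule finite_subset) simp
qed

lemma regions_subset_cbox: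
  "R0 n \<union> Rreg n \<union> Lreg n \<subseteq> cbox (- 2 * real n, - 2 * real n) (2 * real n, 2 * real n)"
proof
  fix z assume z: "z \<in> R0 n \<union> Rreg n \<union> Lreg n"
  obtain x y where xy: "z = (x, y)" by fastforce
  have "0 \<le> x + y \<and> x + y \<le> 2 * real n \<and> x - y \<le> real n \<and> y - x \<le> real n"
    using z unfolding xy R0_def Rreg_def Lreg_def abs_le_iff by (auto intro: order_trans[rotated])
  then show "z \<in> cbox (- 2 * real n, - 2 * real n) (2 * real n, 2 * real n)"
    unfolding xy cbox_Pair_eq by auto
qed

lemma finite_Lambda_regions:
  "finite (Lambda (R0 n))" "finite (Lambda (Rreg n \<union> Lreg n))"
  using regions_subset_cbox[of n]
  by (auto intro!: finite_Lambda bounded_subset[OF bounded_cbox])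

definition lattice_triangle :: "nat \<Rightarrow> (nat \<times> nat) set" where
  "lattice_triangle m = {(p, q). p + q \<le> m}"

definition half_lattice_triangle :: "nat \<Rightarrow> (nat \<times> nat) set" where
  "half_lattice_triangle m = {(p, q). 2 * p + q \<le> m}"

lemma finite_lattice_triangle: "finite (lattice_triangle m)"
  by (rule finite_subset[of _ "{..m} \<times> {..m}"]) (auto simp: lattice_triangle_def)

lemma finite_half_lattice_triangle: "finite (half_lattice_triangle m)"
  by (rule finite_subset[of _ "{..m} \<times> {..m}"]) (auto simp: half_lattice_triangle_def)

lemma lattice_triangle_mono: "k \<le> m \<Longrightarrow> lattice_triangle k \<subseteq> lattice_triangle m"
  unfolding lattice_triangle_def by auto

lemma card_lattice_triangle: "2 * card (lattice_triangle m) = (m + 1) * (m + 2)"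
proof (induction m)
  case 0
  have "lattice_triangle 0 = {(0, 0)}"
    unfolding lattice_triangle_def by auto
  then show ?case by simp
next
  case (Suc m)
  let ?diagonal = "(\<lambda>p. (p, Suc m - p)) ` {..Suc m}"
  have "lattice_triangle (Suc m) = lattice_triangle m \<union> ?diagonal"
    unfolding lattice_triangle_def by (auto simp: image_iff)
  moreover have "lattice_triangle m \<inter> ?diagonal = {}"
    unfolding lattice_triangle_def by auto
  moreover have "card ?diagonal = Suc m + 1"
    by (subst card_image) (auto simp: inj_on_def)
  ultimately have "card (lattice_triangle (Suc m)) = card (lattice_triangle m) + (Suc m + 1)"
    using finite_lattice_triangle by (simp add: card_Un_disjoint)
  then show ?case
    using Suc.IH by simp
qed

lemma card_lattice_triangle_diff:
  assumes "k \<le> m"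
  shows "2 * card (lattice_triangle m - lattice_triangle k) = (m + 1) * (m + 2) - (k + 1) * (k + 2)"
  using card_lattice_triangle[of m] card_lattice_triangle[of k] lattice_triangle_mono[OF assms]
    finite_lattice_triangle by (simp add: card_Diff_subset diff_mult_distrib2)

text \<open>The maps \<open>(p, q) \<mapsto> (p, p + q)\<close> and \<open>(p, q) \<mapsto> (p + q + 1, p)\<close> embed two copies
  of the half triangle into the disjoint parts \<open>x \<le> y\<close> and \<open>x > y\<close> of \<open>lattice_triangle (m + 1)\<close>.\<close>
lemma card_half_lattice_triangle_le: "4 * card (half_lattice_triangle m) \<le> (m + 2) * (m + 3)"
proof -
  define f :: "nat \<times> nat \<Rightarrow> nat \<times> nat" where "f = (\<lambda>(p, q). (p, p + q))"
  define g :: "nat \<times> nat \<Rightarrow> nat \<times> nat" where "g = (\<lambda>(p, q). (p + q + 1, p))"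
  let ?H = "half_lattice_triangle m"
  have "inj_on f ?H" "inj_on g ?H"
    unfolding f_def g_def by (auto simp: inj_on_def)
  moreover have "f ` ?H \<inter> g ` ?H = {}"
    unfolding f_def g_def by auto
  ultimately have "card (f ` ?H \<union> g ` ?H) = 2 * card ?H"
    using finite_half_lattice_triangle by (simp add: card_Un_disjoint card_image)
  moreover have "f ` ?H \<union> g ` ?H \<subseteq> lattice_triangle (m + 1)"
    unfolding f_def g_def half_lattice_triangle_def lattice_triangle_def by auto
  ultimately have "2 * card ?H \<le> card (lattice_triangle (m + 1))"
    by (metis card_mono finite_lattice_triangle)
  then have "4 * card ?H \<le> 2 * card (lattice_triangle (m + 1))"
    by linarith
  also have "\<dots> = (m + 2) * (m + 3)"
    by (simp only: card_lattice_triangle) (simp add: algebra_simps)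
  finally show ?thesis .
qed

lemma embeds_half_lattice_triangle_size:
  assumes inj: "inj_on f A" and into: "f ` A \<subseteq> half_lattice_triangle (nat \<lfloor>r\<rfloor>)" and "0 \<le> r"
  shows "finite A" "4 * real (card A) \<le> (r + 2) * (r + 3)"
proof -
  let ?m = "nat \<lfloor>r\<rfloor>"
  show "finite A"
    using inj into finite_half_lattice_triangle by (rule inj_on_finite)
  have "card A \<le> card (half_lattice_triangle ?m)"
    using inj into finite_half_lattice_triangle by (rule card_inj_on_le)
  then have "4 * real (card A) \<le> real ((?m + 2) * (?m + 3))"
    using card_half_lattice_triangle_le[of ?m] by linarith
  also have "\<dots> = (real ?m + 2) * (real ?m + 3)"
    by (simp add: algebra_simps)
  also have "\<dots> \<le> (r + 2) * (r + 3)"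
    using \<open>0 \<le> r\<close> by (intro mult_mono) auto
  finally show "4 * real (card A) \<le> (r + 2) * (r + 3)" .
qed

lemma embeds_lattice_triangle_diff_size:
  assumes inj: "inj_on f A" and into: "f ` A \<subseteq> lattice_triangle m - lattice_triangle k" and "k \<le> m"
  shows "finite A" "2 * real (card A) \<le> real ((m + 1) * (m + 2)) - real ((k + 1) * (k + 2))"
proof -
  have fin: "finite (lattice_triangle m - lattice_triangle k)"
    using finite_lattice_triangle by simp
  show "finite A"
    using inj into fin by (rule inj_on_finite)
  have "card A \<le> card (lattice_triangle m - lattice_triangle k)"
    using inj into fin by (rule card_inj_on_le)
  moreover have "(k + 1) * (k + 2) \<le> (m + 1) * (m + 2)"
    using \<open>k \<le> m\<close> by (intro mult_le_mono) auto
  ultimately have "2 * card A + (k + 1) * (k + 2) \<le> (m + 1) * (m + 2)"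
    using card_lattice_triangle_diff[OF \<open>k \<le> m\<close>] by linarith
  then have "real (2 * card A + (k + 1) * (k + 2)) \<le> real ((m + 1) * (m + 2))"
    by (simp only: of_nat_le_iff)
  then show "2 * real (card A) \<le> real ((m + 1) * (m + 2)) - real ((k + 1) * (k + 2))"
    by simp
qed

lemma nat_pair_in_half_lattice_triangle:
  assumes "0 \<le> p" "0 \<le> q" "real_of_int (2 * p + q) \<le> r"
  shows "(nat p, nat q) \<in> half_lattice_triangle (nat \<lfloor>r\<rfloor>)"
proof -
  have "2 * p + q \<le> \<lfloor>r\<rfloor>"
    using assms(3) by (simp only: le_floor_iff)
  then show ?thesis
    using assms(1,2) unfolding half_lattice_triangle_def by simp
qed

lemma nat_pair_in_lattice_triangle_iff:
  "0 \<le> p \<Longrightarrow> 0 \<le> q \<Longrightarrow> (nat p, nat q) \<in> lattice_triangle m \<longleftrightarrow> p + q \<le> int m"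
  unfolding lattice_triangle_def by auto

definition low_corner :: "nat \<Rightarrow> (int \<times> int) set" where
  "low_corner n = {(a, b). 0 \<le> b \<and> a + b \<le> int n \<and> 0.8 * real n < real_of_int (a - b)}"

definition high_corner :: "nat \<Rightarrow> (int \<times> int) set" where
  "high_corner n = {(a, b). a \<le> int n \<and> 2 * \<lceil>0.7 * real n\<rceil> \<le> a + b \<and> 0.4 * real n < real_of_int (a - b)}"

definition middle_band :: "nat \<Rightarrow> (int \<times> int) set" where
  "middle_band n = {(a, b). a \<le> int n \<and> b \<le> int n \<and> int n < a + b \<and> a + b < 2 * \<lceil>0.7 * real n\<rceil>}"

lemma Lambda_R0_diff_subset:
  "Lambda (R0 n) - Lambda (Rreg n \<union> Lreg n) \<subseteq>
     low_corner n \<union> prod.swap ` low_corner n \<union> middle_band n \<union>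
     high_corner n \<union> prod.swap ` high_corner n"
proof (rule subrelI)
  fix a b assume ab: "(a, b) \<in> Lambda (R0 n) - Lambda (Rreg n \<union> Lreg n)"
  define c where "c = \<lceil>0.7 * real n\<rceil>"
  let ?s = "real_of_int a + real_of_int b" and ?d = "real_of_int a - real_of_int b"
  have box: "0 \<le> a" "a \<le> int n" "0 \<le> b" "b \<le> int n"
    and not_R: "?s \<le> real n \<Longrightarrow> \<bar>?d\<bar> > 0.8 * real n"
    and not_L: "2 * real_of_int c \<le> ?s \<Longrightarrow> \<bar>?d\<bar> > 0.4 * real n"
    using ab unfolding Lambda_def R0_def Rreg_def Lreg_def c_def by auto
  consider "a + b \<le> int n" | "int n < a + b" "a + b < 2 * c" | "2 * c \<le> a + b"
    by linarith
  then show "(a, b) \<in> low_corner n \<union> prod.swap ` low_corner n \<union> middle_band n \<union>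
      high_corner n \<union> prod.swap ` high_corner n"
  proof cases
    case 1
    then have "\<bar>?d\<bar> > 0.8 * real n"
      by (intro not_R) (metis of_int_add of_int_of_nat_eq of_int_le_iff)
    then show ?thesis
      using 1 box unfolding low_corner_def by (auto simp: abs_if split: if_splits)
  next
    case 2
    then show ?thesis
      using box unfolding middle_band_def c_def by auto
  next
    case 3
    then have "\<bar>?d\<bar> > 0.4 * real n"
      by (intro not_L) (metis of_int_add of_int_le_iff of_int_mult of_int_numeral)
    then show ?thesis
      using 3 box unfolding high_corner_def c_def by (auto simp: abs_if split: if_splits)
  qed
qed

lemma low_corner_size:
  "finite (low_corner n)" "4 * real (card (low_corner n)) \<le> (0.2 * real n + 2) * (0.2 * real n + 3)"
proof -
  let ?f = "\<lambda>(a, b). (nat b, nat (int n - a - b))"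
  have "inj_on ?f (low_corner n)"
    unfolding low_corner_def inj_on_def by auto
  moreover have "?f ` low_corner n \<subseteq> half_lattice_triangle (nat \<lfloor>0.2 * real n\<rfloor>)"
  proof clarify
    fix a b assume "(a, b) \<in> low_corner n"
    then have "0 \<le> b" "0 \<le> int n - a - b" "real_of_int (2 * b + (int n - a - b)) \<le> 0.2 * real n"
      unfolding low_corner_def by auto
    then show "(nat b, nat (int n - a - b)) \<in> half_lattice_triangle (nat \<lfloor>0.2 * real n\<rfloor>)"
      by (rule nat_pair_in_half_lattice_triangle)
  qed
  ultimately show "finite (low_corner n)"
    "4 * real (card (low_corner n)) \<le> (0.2 * real n + 2) * (0.2 * real n + 3)"
    by (simp_all add: embeds_half_lattice_triangle_size)
qed

lemma high_corner_size:
  "finite (high_corner n)" "4 * real (card (high_corner n)) \<le> (0.2 * real n + 2) * (0.2 * real n + 3)"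
proof -
  define c where "c = \<lceil>0.7 * real n\<rceil>"
  let ?f = "\<lambda>(a, b). (nat (int n - a), nat (a + b - 2 * c))"
  have "inj_on ?f (high_corner n)"
    unfolding high_corner_def c_def inj_on_def by auto
  moreover have "?f ` high_corner n \<subseteq> half_lattice_triangle (nat \<lfloor>0.2 * real n\<rfloor>)"
  proof clarify
    fix a b assume "(a, b) \<in> high_corner n"
    then have ab: "a \<le> int n" "2 * c \<le> a + b" "0.4 * real n < real_of_int (a - b)"
      unfolding high_corner_def c_def by auto
    have "0.7 * real n \<le> real_of_int c"
      unfolding c_def by (rule le_of_int_ceiling)
    moreover have "real_of_int (2 * (int n - a) + (a + b - 2 * c)) =
        2 * real n - real_of_int (a - b) - 2 * real_of_int c"
      by simp
    ultimately have "0 \<le> int n - a" "0 \<le> a + b - 2 * c"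
      "real_of_int (2 * (int n - a) + (a + b - 2 * c)) \<le> 0.2 * real n"
      using ab by auto
    then show "(nat (int n - a), nat (a + b - 2 * c)) \<in> half_lattice_triangle (nat \<lfloor>0.2 * real n\<rfloor>)"
      by (rule nat_pair_in_half_lattice_triangle)
  qed
  ultimately show "finite (high_corner n)"
    "4 * real (card (high_corner n)) \<le> (0.2 * real n + 2) * (0.2 * real n + 3)"
    by (simp_all add: embeds_half_lattice_triangle_size)
qed

lemma middle_band_size:
  assumes "0 < n"
  shows "finite (middle_band n)" "2 * real (card (middle_band n)) \<le> 0.64 * (real n)\<^sup>2 + 2.2 * real n"
proof -
  define c where "c = \<lceil>0.7 * real n\<rceil>"
  define k where "k = nat (2 * int n - 2 * c)"
  have c_lower: "0.7 * real n \<le> real_of_int c"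
    unfolding c_def by (rule le_of_int_ceiling)
  have c_upper: "real_of_int c \<le> 0.7 * real n + 1"
    unfolding c_def by (rule of_int_ceiling_le_add_one)
  have "c \<le> int n"
    unfolding c_def by (simp add: ceiling_le_iff)
  have "int n < 2 * c"
    using c_lower assms by (simp add: of_int_less_iff[symmetric])
  then have "k \<le> n - 1"
    unfolding k_def by linarith
  have "0.6 * real n - 2 \<le> real k"
    unfolding k_def using c_upper by linarith
  let ?g = "\<lambda>(a, b). (nat (int n - a), nat (int n - b))"
  have "inj_on ?g (middle_band n)"
    unfolding middle_band_def inj_on_def by auto
  moreover have "?g ` middle_band n \<subseteq> lattice_triangle (n - 1) - lattice_triangle k"
  proof clarify
    fix a b assume "(a, b) \<in> middle_band n"
    then have "a \<le> int n" "b \<le> int n" "int n < a + b" "a + b < 2 * c"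
      unfolding middle_band_def c_def by auto
    then have "0 \<le> int n - a" "0 \<le> int n - b" "(int n - a) + (int n - b) \<le> int (n - 1)"
      "\<not> (int n - a) + (int n - b) \<le> int k"
      using \<open>c \<le> int n\<close> unfolding k_def by auto
    then show "(nat (int n - a), nat (int n - b)) \<in> lattice_triangle (n - 1) - lattice_triangle k"
      by (simp add: nat_pair_in_lattice_triangle_iff)
  qed
  ultimately have fin: "finite (middle_band n)"
    and card: "2 * real (card (middle_band n)) \<le> real (n * (n + 1)) - real ((k + 1) * (k + 2))"
    using embeds_lattice_triangle_diff_size[of ?g _ "n - 1" k] \<open>k \<le> n - 1\<close> assms
    by (simp_all add: Suc_diff_Suc)
  show "finite (middle_band n)"
    by (rule fin)
  have "\<bar>0.6 * real n - 1\<bar> \<le> \<bar>real k + 1\<bar>"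
    using \<open>0.6 * real n - 2 \<le> real k\<close> by linarith
  then have "(0.6 * real n - 1)\<^sup>2 \<le> (real k + 1)\<^sup>2"
    by (simp only: abs_le_square_iff)
  also have "\<dots> \<le> real ((k + 1) * (k + 2))"
    by (simp add: power2_eq_square algebra_simps)
  finally show "2 * real (card (middle_band n)) \<le> 0.64 * (real n)\<^sup>2 + 2.2 * real n"
    using card by (simp add: power2_eq_square algebra_simps)
qed

lemma card_Lambda_R0_diff_le:
  assumes "0 < n"
  shows "real (card (Lambda (R0 n) - Lambda (Rreg n \<union> Lreg n))) \<le> 0.36 * (real n)\<^sup>2 + 9 * real n"
proof -
  let ?low = "low_corner n" and ?mid = "middle_band n" and ?high = "high_corner n"
  have fin: "finite ?low" "finite ?mid" "finite ?high"
    using low_corner_size(1) middle_band_size(1)[OF assms] high_corner_size(1) .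
  have "card (Lambda (R0 n) - Lambda (Rreg n \<union> Lreg n)) \<le>
      card (?low \<union> prod.swap ` ?low \<union> ?mid \<union> ?high \<union> prod.swap ` ?high)"
    using Lambda_R0_diff_subset fin by (intro card_mono) auto
  also have "\<dots> \<le> card ?low + card (prod.swap ` ?low) + card ?mid + card ?high + card (prod.swap ` ?high)"
    by (meson card_Un_le add_le_mono le_refl order_trans)
  also have "\<dots> \<le> 2 * card ?low + card ?mid + 2 * card ?high"
    using card_image_le[OF fin(1), of prod.swap] card_image_le[OF fin(3), of prod.swap] by linarith
  finally have "real (card (Lambda (R0 n) - Lambda (Rreg n \<union> Lreg n))) \<le>
      2 * real (card ?low) + real (card ?mid) + 2 * real (card ?high)"
    by linarith
  moreover have "(0.2 * real n + 2) * (0.2 * real n + 3) = 0.04 * (real n)\<^sup>2 + real n + 6"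
    by (simp add: power2_eq_square algebra_simps)
  moreover have "1 \<le> real n"
    using assms by simp
  ultimately show ?thesis
    using low_corner_size(2)[of n] middle_band_size(2)[OF assms] high_corner_size(2)[of n]
    by linarith
qed

theorem mainTheorem7:
  shows "\<exists>C::real. \<forall>n::nat. n > 0 \<longrightarrow>
    real (sf (Lambda (R0 n))) \<le>
      2 powr (0.36 * (real n)\<^sup>2 + C * real n) * real (sf (Lambda (Rreg n \<union> Lreg n)))"
proof (rule exI[of _ 9], intro allI impI)
  fix n :: nat assume "n > 0"
  let ?Y = "Lambda (R0 n)" and ?Z = "Lambda (Rreg n \<union> Lreg n)"
  have "real (sf ?Y) \<le> real (2 ^ card (?Y - ?Z) * sf ?Z)"
    using sf_le_pow_card_diff[OF finite_Lambda_regions] by (simp only: of_nat_le_iff)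
  also have "\<dots> = 2 powr real (card (?Y - ?Z)) * real (sf ?Z)"
    by (simp add: powr_realpow)
  also have "\<dots> \<le> 2 powr (0.36 * (real n)\<^sup>2 + 9 * real n) * real (sf ?Z)"
    using card_Lambda_R0_diff_le[OF \<open>n > 0\<close>] by (intro mult_right_mono powr_mono) auto
  finally show "real (sf ?Y) \<le> 2 powr (0.36 * (real n)\<^sup>2 + 9 * real n) * real (sf ?Z)" .
qed

end
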